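(* For all $i < j$ in $\mathbb{N}$, the transposition $(i\ j)$ lies in the bi-immune symmetric group $G_{\mathfrak{B}}$.
   Context: $\mathbb{N}$ denotes the non-negative integers, and $\mathrm{Sym}(\mathbb{N})$ the group of all permutations of $\mathbb{N}$ under composition ($g \circ f$ means apply $f$ first). For $i \in \mathbb{N}$, $\sigma_{(i)}$ is the permutation swapping $i$ and $i+1$ and fixing all other numbers. For $A \subseteq \mathbb{N}$ with increasing enumeration $a_0 < a_1 < \cdots$, define $\sigma_A(x) = \lim_{n \to \infty} (\sigma_{(a_0)} \circ \sigma_{(a_1)} \circ \cdots \circ \sigma_{(a_n)})(x)$ (eventually constant for each $x$). A set $A$ is immune if it is infinite and contains no infinite computably enumerable subset; $A$ is bi-immune if both $A$ and $\mathbb{N} - A$ are immune. For bi-immune $A$, $\sigma_A$ is a permutation of $\mathbb{N}$. The bi-immune symmetric group $G_{\mathfrak{B}}$ is the subgroup of $\mathrm{Sym}(\mathbb{N})$ generated by $\{\sigma_A : A \text{ bi-immune}\}$. *)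

theory Defs
  imports "HOL-Algebra.Bij" "HOL-Algebra.Generated_Groups" "HOL-Library.Infinite_Set"
    "HOL-Combinatorics.Transposition"
begin

inductive prim_rec :: "nat \<Rightarrow> (nat list \<Rightarrow> nat) \<Rightarrow> bool" where
  pr_zero: "prim_rec n (\<lambda>_. 0)"
| pr_succ: "prim_rec 1 (\<lambda>xs. Suc (hd xs))"
| pr_proj: "i < n \<Longrightarrow> prim_rec n (\<lambda>xs. xs ! i)"
| pr_comp: "prim_rec m f \<Longrightarrow> length gs = m \<Longrightarrow> (\<forall>g \<in> set gs. prim_rec n g)
             \<Longrightarrow> prim_rec n (\<lambda>xs. f (map (\<lambda>g. g xs) gs))"
| pr_rec:  "prim_rec n f \<Longrightarrow> prim_rec (n + 2) g
             \<Longrightarrow> prim_rec (Suc n)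
                  (\<lambda>xs. rec_nat (f (tl xs)) (\<lambda>y r. g (y # r # tl xs)) (hd xs))"

text \<open>A set is computably enumerable iff it is Sigma-1, i.e. the projection
  of a primitive recursive binary relation (Kleene normal form).\<close>

definition ce :: "nat set \<Rightarrow> bool" where
  "ce A \<longleftrightarrow> (\<exists>R. prim_rec 2 R \<and> A = {x. \<exists>y. R [x, y] \<noteq> 0})"

definition immune :: "nat set \<Rightarrow> bool" where
  "immune A \<longleftrightarrow> infinite A \<and> \<not> (\<exists>B. B \<subseteq> A \<and> infinite B \<and> ce B)"

definition bi_immune :: "nat set \<Rightarrow> bool" where
  "bi_immune A \<longleftrightarrow> immune A \<and> immune (UNIV - A)"

definition adj_swap :: "nat \<Rightarrow> nat \<Rightarrow> nat" where
  "adj_swap i = transpose i (Suc i)"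

primrec partial_sigma :: "nat set \<Rightarrow> nat \<Rightarrow> nat \<Rightarrow> nat" where
  "partial_sigma A 0 = adj_swap (enumerate A 0)"
| "partial_sigma A (Suc n) = partial_sigma A n \<circ> adj_swap (enumerate A (Suc n))"

definition sigma_set :: "nat set \<Rightarrow> nat \<Rightarrow> nat" where
  "sigma_set A x = (THE y. \<exists>N. \<forall>n\<ge>N. partial_sigma A n x = y)"

definition G_B :: "(nat \<Rightarrow> nat) set" where
  "G_B = generate (BijGroup (UNIV :: nat set)) {sigma_set A | A. bi_immune A}"

end

theory Submission
  imports Defs "HOL-Library.Countable_Set"
begin

text \<open>Conjugating by \<sigma>_(j) turns (i j) into (i j+1), so it suffices to obtain every adjacent
  transposition \<sigma>_(k). If B is bi-immune with min B > k, then so is {k} \<union> B, and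
  \<sigma>_{{k} \<union> B} = \<sigma>_(k) \<circ> \<sigma>_B; hence \<sigma>_(k) = \<sigma>_{{k} \<union> B} \<circ> \<sigma>_B\<inverse> lies in the group. Such B exist
  because there are only countably many c.e. sets: a diagonal construction gives a set splitting
  every infinite c.e. set into two infinite halves, and every finite modification of it is
  bi-immune.\<close>

datatype pr_term = Zero_pr | Succ_pr | Proj_pr nat | Comp_pr pr_term "pr_term list" | Rec_pr pr_term pr_term

fun eval_pr_term :: "pr_term \<Rightarrow> nat list \<Rightarrow> nat" where
  "eval_pr_term Zero_pr xs = 0"
| "eval_pr_term Succ_pr xs = Suc (hd xs)"
| "eval_pr_term (Proj_pr i) xs = xs ! i"
| "eval_pr_term (Comp_pr f gs) xs = eval_pr_term f (map (\<lambda>g. eval_pr_term g xs) gs)"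
| "eval_pr_term (Rec_pr f g) xs =
     rec_nat (eval_pr_term f (tl xs)) (\<lambda>y r. eval_pr_term g (y # r # tl xs)) (hd xs)"

instance pr_term :: countable by countable_datatype

lemma prim_rec_eval_pr_term: "prim_rec n f \<Longrightarrow> \<exists>t. f = eval_pr_term t"
proof (induction rule: prim_rec.induct)
  case (pr_zero n)
  have "(\<lambda>_. 0) = eval_pr_term Zero_pr" by (simp add: fun_eq_iff)
  then show ?case by blast
next
  case pr_succ
  have "(\<lambda>xs. Suc (hd xs)) = eval_pr_term Succ_pr" by (simp add: fun_eq_iff)
  then show ?case by blast
next
  case (pr_proj i n)
  have "(\<lambda>xs. xs ! i) = eval_pr_term (Proj_pr i)" by (simp add: fun_eq_iff)
  then show ?case by blast
next
  case (pr_comp m f gs n)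
  obtain t where t: "f = eval_pr_term t" using pr_comp.IH by blast
  have "\<forall>g\<in>set gs. \<exists>t. g = eval_pr_term t" using pr_comp.IH by blast
  then obtain ts where "gs = map eval_pr_term ts"
    by (metis (no_types) ex_map_conv)
  then have "(\<lambda>xs. f (map (\<lambda>g. g xs) gs)) = eval_pr_term (Comp_pr t ts)"
    by (simp add: fun_eq_iff t o_def)
  then show ?case by blast
next
  case (pr_rec n f g)
  then obtain t u where "f = eval_pr_term t" "g = eval_pr_term u" by blast
  then have "(\<lambda>xs. rec_nat (f (tl xs)) (\<lambda>y r. g (y # r # tl xs)) (hd xs)) = eval_pr_term (Rec_pr t u)"
    by (simp add: fun_eq_iff)
  then show ?case by blast
qed

lemma countable_ce: "countable {B. ce B}"
proof -
  have "{B. ce B} \<subseteq> range (\<lambda>t. {x. \<exists>y. eval_pr_term t [x, y] \<noteq> 0})"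
    unfolding ce_def using prim_rec_eval_pr_term by blast
  then show ?thesis by (rule countable_subset) simp
qed

lemma ce_UNIV: "ce UNIV"
proof -
  have "prim_rec 2 (\<lambda>xs. Suc (hd (map (\<lambda>g. g xs) [\<lambda>_. 0])))"
    using prim_rec.pr_comp[OF prim_rec.pr_succ, of "[\<lambda>_. 0]" 2] by (simp add: prim_rec.pr_zero)
  then show ?thesis unfolding ce_def by (intro exI[of _ "\<lambda>_. 1"]) simp
qed

lemma infinite_nat_two_above:
  assumes "infinite (B :: nat set)"
  shows "\<exists>a\<in>B. \<exists>b\<in>B. m \<le> a \<and> a < b"
proof -
  obtain a where "a \<in> B" "m \<le> a" using assms unfolding infinite_nat_iff_unbounded_le by blast
  moreover obtain b where "b \<in> B" "Suc a \<le> b" using assms unfolding infinite_nat_iff_unbounded_le by blast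
  ultimately show ?thesis by (intro bexI[of _ a] bexI[of _ b]) simp_all
qed

lemma countable_family_meets_and_misses:
  fixes F :: "nat set set"
  assumes "countable F" and "\<forall>B\<in>F. infinite B"
  shows "\<exists>A. \<forall>B\<in>F. B \<inter> A \<noteq> {} \<and> B - A \<noteq> {}"
proof (cases "F = {}")
  case False
  define f where "f = from_nat_into F"
  have range_f: "range f = F" using False assms(1) by (simp add: f_def)
  have "\<exists>q. fst q \<in> f n \<and> snd q \<in> f n \<and> m \<le> fst q \<and> fst q < snd q" for n m
  proof -
    have "infinite (f n)" using range_f assms(2) by blast
    then obtain a b where "a \<in> f n" "b \<in> f n" "m \<le> a" "a < b"
      using infinite_nat_two_above by blast
    then show ?thesis by (intro exI[of _ "(a, b)"]) simp
  qed
  then obtain p where p: "\<And>n m. fst (p n m) \<in> f n \<and> snd (p n m) \<in> f n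
      \<and> m \<le> fst (p n m) \<and> fst (p n m) < snd (p n m)"
    by metis
  \<comment> \<open>x 0 < y 0 < x 1 < y 1 < \<dots> with x n, y n \<in> f n; the set A is range x\<close>
  define q where "q = rec_nat (p 0 0) (\<lambda>n q. p (Suc n) (Suc (snd q)))"
  define x where "x n = fst (q n)" for n
  define y where "y n = snd (q n)" for n
  have "\<exists>m. q n = p n m" for n by (cases n) (auto simp: q_def)
  then have x_in: "x n \<in> f n" and y_in: "y n \<in> f n" and x_less_y: "x n < y n" for n
    using p unfolding x_def y_def by metis+
  have y_less_x_Suc: "y n < x (Suc n)" for n
    using p[of "Suc n" "Suc (y n)"] by (simp add: x_def y_def q_def)
  have "strict_mono x"
    unfolding strict_mono_Suc_iff using x_less_y y_less_x_Suc less_trans by blast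
  have y_not_x: "y m \<noteq> x n" for m n
  proof (cases "n \<le> m")
    case True
    then have "x n < y m"
      using strict_mono_less_eq[OF \<open>strict_mono x\<close>, of n m] x_less_y[of m] by simp
    then show ?thesis by simp
  next
    case False
    then have "y m < x n"
      using strict_mono_less_eq[OF \<open>strict_mono x\<close>, of "Suc m" n] y_less_x_Suc[of m] by simp
    then show ?thesis by simp
  qed
  show ?thesis
  proof (intro exI ballI)
    fix B assume "B \<in> F"
    then obtain n where "B = f n" using range_f by blast
    then show "B \<inter> range x \<noteq> {} \<and> B - range x \<noteq> {}"
      using x_in y_in y_not_x by blast
  qed
qed simp

lemma countable_family_splits:
  fixes F :: "nat set set"
  assumes "countable F" and "\<forall>B\<in>F. infinite B"
  shows "\<exists>A. \<forall>B\<in>F. infinite (B \<inter> A) \<and> infinite (B - A)"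
proof -
  define tails where "tails = (\<lambda>(B, m). B \<inter> {m..}) ` (F \<times> UNIV)"
  have "countable tails" unfolding tails_def
    by (intro countable_image countable_SIGMA) (simp_all add: assms(1))
  moreover have "\<forall>T\<in>tails. infinite T"
  proof
    fix T assume "T \<in> tails"
    then obtain B m where "B \<in> F" "T = B \<inter> {m..}" unfolding tails_def by auto
    moreover have "B \<inter> {m..} = B - {..<m}" by auto
    ultimately show "infinite T" using assms(2) by simp
  qed
  ultimately obtain A where A: "\<forall>T\<in>tails. T \<inter> A \<noteq> {} \<and> T - A \<noteq> {}"
    using countable_family_meets_and_misses[of tails] by blast
  have "infinite (B \<inter> A) \<and> infinite (B - A)" if "B \<in> F" for B
  proof -
    have "B \<inter> {m..} \<in> tails" for m
      unfolding tails_def using that by (intro image_eqI[of _ _ "(B, m)"]) auto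
    then have "B \<inter> {m..} \<inter> A \<noteq> {}" "B \<inter> {m..} - A \<noteq> {}" for m
      using A by blast+
    then have "\<exists>n\<ge>m. n \<in> B \<inter> A" "\<exists>n\<ge>m. n \<in> B - A" for m
      by auto
    then show ?thesis unfolding infinite_nat_iff_unbounded_le by blast
  qed
  then show ?thesis by blast
qed

definition splits_ce :: "nat set \<Rightarrow> bool" where
  "splits_ce A \<longleftrightarrow> (\<forall>B. infinite B \<and> ce B \<longrightarrow> infinite (B \<inter> A) \<and> infinite (B - A))"

lemma splits_ce_exists: "\<exists>A. splits_ce A"
proof -
  have "countable {B. infinite B \<and> ce B}"
    by (rule countable_subset[OF _ countable_ce]) blast
  moreover have "\<forall>B\<in>{B. infinite B \<and> ce B}. infinite B" by blast
  ultimately obtain A where "\<forall>B\<in>{B. infinite B \<and> ce B}. infinite (B \<inter> A) \<and> infinite (B - A)"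
    using countable_family_splits by blast
  then have "splits_ce A" unfolding splits_ce_def by blast
  then show ?thesis ..
qed

lemma splits_ce_finite_change:
  assumes "splits_ce A" and "finite (A - A')" and "finite (A' - A)"
  shows "splits_ce A'"
  unfolding splits_ce_def
proof (intro allI impI)
  fix B assume B: "infinite B \<and> ce B"
  have "infinite (B \<inter> A)" "infinite (B - A)"
    using assms(1) B unfolding splits_ce_def by blast+
  then have "infinite (B \<inter> A - (A - A'))" "infinite (B - A - (A' - A))"
    using assms(2,3) by (simp_all add: Diff_infinite_finite)
  moreover have "B \<inter> A - (A - A') \<subseteq> B \<inter> A'" "B - A - (A' - A) \<subseteq> B - A'" by auto
  ultimately show "infinite (B \<inter> A') \<and> infinite (B - A')"
    by (meson infinite_super)
qed

lemma splits_ce_Int_greaterThan: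
  assumes "splits_ce A"
  shows "splits_ce (A \<inter> {k<..})"
proof (rule splits_ce_finite_change[OF assms])
  have "A - A \<inter> {k<..} \<subseteq> {..k}" by auto
  then show "finite (A - A \<inter> {k<..})" by (rule finite_subset) simp
  show "finite (A \<inter> {k<..} - A)" by (rule finite_subset[of _ "{}"]) auto
qed

lemma splits_ce_insert:
  assumes "splits_ce A"
  shows "splits_ce (insert k A)"
proof (rule splits_ce_finite_change[OF assms])
  show "finite (insert k A - A)" by (rule finite_subset[of _ "{k}"]) auto
qed simp

lemma splits_ce_imp_bi_immune:
  assumes "splits_ce A"
  shows "bi_immune A"
proof -
  have "infinite (UNIV \<inter> A)" "infinite (UNIV - A)"
    using assms ce_UNIV unfolding splits_ce_def by blast+
  moreover have "\<not> B \<subseteq> A" "\<not> B \<subseteq> UNIV - A" if "infinite B" "ce B" for B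
  proof -
    have "infinite (B \<inter> A)" "infinite (B - A)"
      using assms that unfolding splits_ce_def by blast+
    then show "\<not> B \<subseteq> A" "\<not> B \<subseteq> UNIV - A" using infinite_imp_nonempty by blast+
  qed
  ultimately show ?thesis unfolding bi_immune_def immune_def by auto
qed

lemma adj_swap_fixes_below: "x < k \<Longrightarrow> adj_swap k x = x"
  unfolding adj_swap_def by simp

lemma bij_adj_swap: "bij (adj_swap k)"
  unfolding adj_swap_def by simp

lemma bij_partial_sigma: "bij (partial_sigma A n)"
  by (induction n) (auto simp only: partial_sigma.simps intro: bij_comp bij_adj_swap)

lemma partial_sigma_stable:
  assumes "infinite A" and "x \<le> n"
  shows "partial_sigma A n x = partial_sigma A x x"
  using assms(2)
proof (induction n rule: dec_induct)
  case (step n)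
  \<comment> \<open>the swaps added after stage n act above enumerate A (Suc n) \<ge> Suc n > x\<close>
  have "x < enumerate A (Suc n)" using step.hyps le_enumerate[OF assms(1), of "Suc n"] by simp
  then show ?case using step.IH by (simp add: adj_swap_fixes_below)
qed simp

lemma sigma_set_eq_partial_sigma:
  assumes "infinite A" and "x \<le> n"
  shows "sigma_set A x = partial_sigma A n x"
proof -
  have "sigma_set A x = partial_sigma A x x"
    unfolding sigma_set_def
  proof (rule the_equality)
    show "\<exists>N. \<forall>n\<ge>N. partial_sigma A n x = partial_sigma A x x"
      using partial_sigma_stable[OF assms(1)] by blast
  next
    fix y assume "\<exists>N. \<forall>n\<ge>N. partial_sigma A n x = y"
    then obtain N where "\<forall>n\<ge>N. partial_sigma A n x = y" by blast
    then have "y = partial_sigma A (max N x) x" by simp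
    also have "\<dots> = partial_sigma A x x" by (rule partial_sigma_stable[OF assms(1)]) simp
    finally show "y = partial_sigma A x x" .
  qed
  also have "\<dots> = partial_sigma A n x" using partial_sigma_stable[OF assms] by simp
  finally show ?thesis .
qed

lemma partial_sigma_atMost:
  assumes "infinite A" and "z \<notin> A"
  shows "partial_sigma A n ` {..z} = {..z}"
proof -
  have swap_atMost: "adj_swap k ` {..z} = {..z}" if "k \<in> A" for k
  proof -
    have "k \<noteq> z" using that assms(2) by blast
    then show ?thesis unfolding adj_swap_def by (intro transpose_image_eq) auto
  qed
  show ?thesis
  proof (induction n)
    case 0
    show ?case using swap_atMost enumerate_in_set[OF assms(1)] by simp
  next
    case (Suc n)
    show ?case using swap_atMost enumerate_in_set[OF assms(1)] Suc.IH
      by (simp only: partial_sigma.simps image_comp[symmetric])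
  qed
qed

lemma bij_sigma_set:
  assumes "infinite A" and "infinite (UNIV - A)"
  shows "bij (sigma_set A)"
proof (rule bijI)
  show "inj (sigma_set A)"
  proof (rule injI)
    fix x x' assume "sigma_set A x = sigma_set A x'"
    then have "partial_sigma A (max x x') x = partial_sigma A (max x x') x'"
      using sigma_set_eq_partial_sigma[OF assms(1), of _ "max x x'"] by simp
    then show "x = x'" using bij_partial_sigma bij_is_inj injD by metis
  qed
next
  show "surj (sigma_set A)"
  proof (rule surjI)
    fix y
    \<comment> \<open>a gap z \<ge> y of A: the stage-z partial product permutes {..z}\<close>
    obtain z where z: "y \<le> z" "z \<notin> A"
      using assms(2) unfolding infinite_nat_iff_unbounded_le by blast
    then have "y \<in> partial_sigma A z ` {..z}" using partial_sigma_atMost[OF assms(1) z(2)] by simp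
    then obtain x where "x \<le> z" "partial_sigma A z x = y" by auto
    then have "sigma_set A x = y" using sigma_set_eq_partial_sigma[OF assms(1), of x z] by simp
    then show "sigma_set A (SOME x. sigma_set A x = y) = y" by (rule someI)
  qed
qed

lemma partial_sigma_insert:
  assumes "infinite A" and "\<forall>a\<in>A. k < a"
  shows "partial_sigma (insert k A) (Suc n) = adj_swap k \<circ> partial_sigma A n"
proof -
  have least: "(LEAST a. a \<in> insert k A) = k"
    by (rule Least_equality) (use assms(2) in auto)
  have "insert k A - {k} = A" using assms(2) by auto
  then have enum: "enumerate (insert k A) 0 = k" "enumerate (insert k A) (Suc m) = enumerate A m" for m
    using least by (simp_all add: enumerate_0 enumerate_Suc)
  show ?thesis
  proof (induction n)
    case 0
    show ?case by (simp only: partial_sigma.simps enum)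
  next
    case (Suc n)
    have "partial_sigma (insert k A) (Suc (Suc n))
        = partial_sigma (insert k A) (Suc n) \<circ> adj_swap (enumerate A (Suc n))"
      by (simp only: partial_sigma.simps(2) enum)
    also have "\<dots> = adj_swap k \<circ> partial_sigma A (Suc n)"
      unfolding Suc.IH by (simp only: partial_sigma.simps(2) o_assoc)
    finally show ?case .
  qed
qed

lemma sigma_set_insert:
  assumes "infinite A" and "\<forall>a\<in>A. k < a"
  shows "sigma_set (insert k A) = adj_swap k \<circ> sigma_set A"
proof
  fix x
  have "sigma_set (insert k A) x = partial_sigma (insert k A) (Suc x) x"
    using sigma_set_eq_partial_sigma[of "insert k A" x "Suc x"] assms(1) by simp
  also have "\<dots> = adj_swap k (sigma_set A x)"
    using partial_sigma_insert[OF assms] sigma_set_eq_partial_sigma[OF assms(1), of x x] by simp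
  finally show "sigma_set (insert k A) x = (adj_swap k \<circ> sigma_set A) x" by simp
qed

lemma bi_immune_infinite:
  assumes "bi_immune A"
  shows "infinite A" and "infinite (UNIV - A)"
  using assms unfolding bi_immune_def immune_def by simp_all

lemma bi_immune_sigma_set_Bij: "bi_immune A \<Longrightarrow> sigma_set A \<in> Bij UNIV"
  using bij_sigma_set[OF bi_immune_infinite] by (simp add: Bij_def)

lemma subgroup_G_B: "subgroup G_B (BijGroup UNIV)"
  unfolding G_B_def
  by (rule group.generate_is_subgroup[OF group_BijGroup])
     (auto simp: BijGroup_def bi_immune_sigma_set_Bij)

lemma G_B_subset_Bij: "G_B \<subseteq> Bij UNIV"
  using subgroup.subset[OF subgroup_G_B] by (simp add: BijGroup_def)

lemma G_B_comp_closed: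
  assumes "f \<in> G_B" and "g \<in> G_B"
  shows "f \<circ> g \<in> G_B"
proof -
  have "f \<otimes>\<^bsub>BijGroup UNIV\<^esub> g \<in> G_B" using subgroup.m_closed[OF subgroup_G_B assms] .
  moreover have "f \<otimes>\<^bsub>BijGroup UNIV\<^esub> g = f \<circ> g"
    using assms G_B_subset_Bij by (auto simp: BijGroup_def compose_def fun_eq_iff)
  ultimately show ?thesis by simp
qed

lemma G_B_inv_into_closed:
  assumes "f \<in> G_B"
  shows "inv_into UNIV f \<in> G_B"
proof -
  have "f \<in> Bij UNIV" using assms G_B_subset_Bij by blast
  then have "inv\<^bsub>BijGroup UNIV\<^esub> f = inv_into UNIV f"
    by (simp add: inv_BijGroup fun_eq_iff)
  then show ?thesis using subgroup.m_inv_closed[OF subgroup_G_B assms] by simp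
qed

lemma sigma_set_in_G_B: "bi_immune A \<Longrightarrow> sigma_set A \<in> G_B"
  unfolding G_B_def by (rule generate.incl) blast

lemma adj_swap_in_G_B: "adj_swap k \<in> G_B"
proof -
  obtain A where A: "splits_ce A" using splits_ce_exists by blast
  define B where "B = A \<inter> {k<..}"
  have "splits_ce B" "splits_ce (insert k B)"
    using A by (simp_all add: B_def splits_ce_Int_greaterThan splits_ce_insert)
  then have bi: "bi_immune B" "bi_immune (insert k B)" by (simp_all add: splits_ce_imp_bi_immune)
  then have inf: "infinite B" and bij: "bij (sigma_set B)"
    using bij_sigma_set[OF bi_immune_infinite] bi_immune_infinite by blast+
  have "adj_swap k = adj_swap k \<circ> (sigma_set B \<circ> inv_into UNIV (sigma_set B))"
    using bij_is_surj[OF bij] by (simp add: surj_iff)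
  also have "\<dots> = sigma_set (insert k B) \<circ> inv_into UNIV (sigma_set B)"
    using sigma_set_insert[OF inf, of k] by (simp add: B_def o_assoc)
  also have "\<dots> \<in> G_B"
    by (intro G_B_comp_closed G_B_inv_into_closed sigma_set_in_G_B bi)
  finally show ?thesis .
qed

theorem lemma2p4:
  fixes i j :: nat
  assumes "i < j"
  shows "transpose i j \<in> G_B"
proof -
  have "Suc i \<le> j" using assms by simp
  then show ?thesis
  proof (induction j rule: dec_induct)
    case base
    show ?case using adj_swap_in_G_B[of i] by (simp add: adj_swap_def)
  next
    case (step j)
    have "transpose (Suc j) j \<circ> transpose j i \<circ> transpose (Suc j) j = transpose (Suc j) i"
      using step.hyps by (intro transpose_comp_triple) auto
    then have "transpose i (Suc j) = adj_swap j \<circ> transpose i j \<circ> adj_swap j"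
      unfolding adj_swap_def by (simp only: transpose_commute)
    also have "\<dots> \<in> G_B"
      using step.IH by (intro G_B_comp_closed adj_swap_in_G_B)
    finally show ?case .
  qed
qed

end
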